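(* Assume ideal Weyl gates. Let $\mathcal{M}$ be a noisy $n$-qudit instrument with generalized Pauli fidelities $\tilde\nu_{s,t}$. Let $\vec k=(k_1,\dots,k_m)$ be the output of the instrument benchmarking routine with sequence length $m$ and initial state $\rho$. Let $c_1,\dots,c_m\in\mathbb{Z}_d^n$ and set $c_{m+1}=0$. Then the expectation value of $$\prod_{j=1}^m\chi_{k_j}(c_j-c_{j+1})^*$$ equals $$\kappa(\vec c)=\operatorname{tr}\big(Z^{-c_1}\rho\big)\prod_{j=1}^m\tilde\nu_{c_j,c_{j+1}}.$$
   Context: Let $d,n$ be positive integers, with arithmetic on $\mathbb{Z}_d^n$ modulo $d$. Let $\chi_z(j)=e^{2\pi i z\cdot j/d}$, $X^x=\sum_j|j+x\rangle\langle j|$, and $Z^z=\sum_j\chi_z(j)|j\rangle\langle j|$ (so $Z^{-c}$ denotes $Z^{(-c)}$). For an operator $A$, $\mathcal{A}(\rho)=A\rho A^\dagger$. An instrument $\{\mathcal{M}_o\}_{o\in\mathbb{Z}_d^n}$ is a family of completely positive trace-non-increasing maps summing to a trace-preserving map. Its generalized Pauli fidelities are $$\tilde\nu_{s,t}=d^{-n}\sum_k\chi_k(s-t)^*\operatorname{tr}\big((Z^t)^\dagger\mathcal{M}_k(Z^s)\big).$$ The instrument benchmarking routine with sequence length $m$ proceeds as follows: - Prepare $\rho$ and set $\alpha_0=0$. - For $i=1,\dots,m$: choose $\alpha_i,\beta_i\in\mathbb{Z}_d^n$ uniformly at random; apply the ideal gate $Z^{\beta_i}X^{\alpha_{i-1}-\alpha_i}$;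 measure with the noisy instrument (outcome $o$ occurs with probability $\operatorname{tr}\mathcal{M}_o(\sigma)$ and leaves the state $\mathcal{M}_o(\sigma)/\operatorname{tr}\mathcal{M}_o(\sigma)$), obtaining $o_i$; record $k_i=\alpha_i+o_i$. - Return $\vec k=(k_1,\dots,k_m)$. *)

theory Defs
  imports Complex_Main
begin

text \<open>Elements of Z_d^n are represented as functions nat => nat that are
  below d on the coordinates 0..n-1 and zero elsewhere.  Operators on the
  Hilbert space spanned by the basis |j>, j in Z_d^n, are represented by their
  matrix entries A j k = <j|A|k>; only entries with j,k in the carrier matter.\<close>

type_synonym zvec = "nat \<Rightarrow> nat"
type_synonym qop = "zvec \<Rightarrow> zvec \<Rightarrow> complex"

definition Zdn :: "nat \<Rightarrow> nat \<Rightarrow> zvec set" where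
  "Zdn d n = {x. (\<forall>i<n. x i < d) \<and> (\<forall>i\<ge>n. x i = 0)}"

definition zero_v :: zvec where "zero_v = (\<lambda>_. 0)"

definition addv :: "nat \<Rightarrow> nat \<Rightarrow> zvec \<Rightarrow> zvec \<Rightarrow> zvec" where
  "addv d n x y = (\<lambda>i. if i < n then (x i + y i) mod d else 0)"

definition negv :: "nat \<Rightarrow> nat \<Rightarrow> zvec \<Rightarrow> zvec" where
  "negv d n x = (\<lambda>i. if i < n then (d - x i mod d) mod d else 0)"

definition subv :: "nat \<Rightarrow> nat \<Rightarrow> zvec \<Rightarrow> zvec \<Rightarrow> zvec" where
  "subv d n x y = addv d n x (negv d n y)"

definition chi :: "nat \<Rightarrow> nat \<Rightarrow> zvec \<Rightarrow> zvec \<Rightarrow> complex" where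
  "chi d n z j = cis (2 * pi * real (\<Sum>i<n. z i * j i) / real d)"

definition Xop :: "nat \<Rightarrow> nat \<Rightarrow> zvec \<Rightarrow> qop" where
  "Xop d n x = (\<lambda>j k. if j \<in> Zdn d n \<and> k \<in> Zdn d n \<and> j = addv d n k x then 1 else 0)"

definition Zop :: "nat \<Rightarrow> nat \<Rightarrow> zvec \<Rightarrow> qop" where
  "Zop d n z = (\<lambda>j k. if j \<in> Zdn d n \<and> j = k then chi d n z j else 0)"

definition mmult :: "nat \<Rightarrow> nat \<Rightarrow> qop \<Rightarrow> qop \<Rightarrow> qop" where
  "mmult d n A B = (\<lambda>j k. \<Sum>l\<in>Zdn d n. A j l * B l k)"

definition adj :: "qop \<Rightarrow> qop" where
  "adj A = (\<lambda>j k. cnj (A k j))"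

definition qtr :: "nat \<Rightarrow> nat \<Rightarrow> qop \<Rightarrow> complex" where
  "qtr d n A = (\<Sum>j\<in>Zdn d n. A j j)"

definition conj_by :: "nat \<Rightarrow> nat \<Rightarrow> qop \<Rightarrow> qop \<Rightarrow> qop" where
  "conj_by d n A \<rho> = mmult d n A (mmult d n \<rho> (adj A))"

definition psd :: "'i set \<Rightarrow> ('i \<Rightarrow> 'i \<Rightarrow> complex) \<Rightarrow> bool" where
  "psd I A = (\<forall>v. (\<Sum>i\<in>I. \<Sum>j\<in>I. cnj (v i) * A i j * v j) \<in> \<real> \<and>
                  Re (\<Sum>i\<in>I. \<Sum>j\<in>I. cnj (v i) * A i j * v j) \<ge> 0)"

definition density :: "nat \<Rightarrow> nat \<Rightarrow> qop \<Rightarrow> bool" where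
  "density d n \<rho> = (psd (Zdn d n) \<rho> \<and> qtr d n \<rho> = 1)"

definition superop :: "nat \<Rightarrow> nat \<Rightarrow> (qop \<Rightarrow> qop) \<Rightarrow> bool" where
  "superop d n \<Phi> =
     ((\<forall>A B. \<Phi> (\<lambda>j k. A j k + B j k) = (\<lambda>j k. \<Phi> A j k + \<Phi> B j k)) \<and>
      (\<forall>c A. \<Phi> (\<lambda>j k. c * A j k) = (\<lambda>j k. c * \<Phi> A j k)) \<and>
      (\<forall>A B. (\<forall>j\<in>Zdn d n. \<forall>k\<in>Zdn d n. A j k = B j k) \<longrightarrow>
             (\<forall>j\<in>Zdn d n. \<forall>k\<in>Zdn d n. \<Phi> A j k = \<Phi> B j k)))"

text \<open>id_k (tensor) Phi acting on operators on C^k (tensor) H\<close>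
definition ampl :: "(qop \<Rightarrow> qop) \<Rightarrow> ((nat \<times> zvec) \<Rightarrow> (nat \<times> zvec) \<Rightarrow> complex)
                    \<Rightarrow> ((nat \<times> zvec) \<Rightarrow> (nat \<times> zvec) \<Rightarrow> complex)" where
  "ampl \<Phi> X = (\<lambda>(a, j) (b, l). \<Phi> (\<lambda>j' l'. X (a, j') (b, l')) j l)"

definition completely_positive :: "nat \<Rightarrow> nat \<Rightarrow> (qop \<Rightarrow> qop) \<Rightarrow> bool" where
  "completely_positive d n \<Phi> =
     (superop d n \<Phi> \<and>
      (\<forall>k::nat. \<forall>X. psd ({..<k} \<times> Zdn d n) X \<longrightarrow> psd ({..<k} \<times> Zdn d n) (ampl \<Phi> X)))"

definition trace_nonincreasing :: "nat \<Rightarrow> nat \<Rightarrow> (qop \<Rightarrow> qop) \<Rightarrow> bool" where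
  "trace_nonincreasing d n \<Phi> =
     (\<forall>A. psd (Zdn d n) A \<longrightarrow> Re (qtr d n (\<Phi> A)) \<le> Re (qtr d n A))"

definition instrument :: "nat \<Rightarrow> nat \<Rightarrow> (zvec \<Rightarrow> qop \<Rightarrow> qop) \<Rightarrow> bool" where
  "instrument d n M =
     ((\<forall>u\<in>Zdn d n. completely_positive d n (M u) \<and> trace_nonincreasing d n (M u)) \<and>
      (\<forall>A. qtr d n (\<lambda>j k. \<Sum>u\<in>Zdn d n. M u A j k) = qtr d n A))"

definition gpf :: "nat \<Rightarrow> nat \<Rightarrow> (zvec \<Rightarrow> qop \<Rightarrow> qop) \<Rightarrow> zvec \<Rightarrow> zvec \<Rightarrow> complex" where
  "gpf d n M s t = (1 / of_nat (d ^ n)) *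
     (\<Sum>k\<in>Zdn d n. cnj (chi d n k (subv d n s t)) *
        qtr d n (mmult d n (adj (Zop d n t)) (M k (Zop d n s))))"

text \<open>Expectation of prod_j w_j(k_j) over the instrument benchmarking routine.
  Arguments: list of weight functions w_j (one per round), previous alpha, current
  (normalized) state.  Each round: alpha, beta uniform on Z_d^n; apply the gate
  Z^beta X^(alpha_prev - alpha); measure; outcome o with probability tr M_o(sigma),
  post-measurement state M_o(sigma)/tr M_o(sigma); record k = alpha + o.\<close>
fun bench_exp :: "nat \<Rightarrow> nat \<Rightarrow> (zvec \<Rightarrow> qop \<Rightarrow> qop) \<Rightarrow> (zvec \<Rightarrow> complex) list
                  \<Rightarrow> zvec \<Rightarrow> qop \<Rightarrow> complex" where
  "bench_exp d n M [] a \<sigma> = 1"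
| "bench_exp d n M (w # ws) a \<sigma> =
     (\<Sum>\<alpha>\<in>Zdn d n. \<Sum>\<beta>\<in>Zdn d n. \<Sum>u\<in>Zdn d n.
        (let G = mmult d n (Zop d n \<beta>) (Xop d n (subv d n a \<alpha>));
             \<tau> = M u (conj_by d n G \<sigma>);
             p = qtr d n \<tau>
         in if p = 0 then 0
            else (1 / of_nat (d ^ n)) * (1 / of_nat (d ^ n)) * p * w (addv d n \<alpha> u) *
                 bench_exp d n M ws \<alpha> (\<lambda>j k. \<tau> j k / p)))"

end

theory Submission
  imports Defs "HOL-Library.FuncSet"
begin

text \<open>
  Induct backwards over the rounds: given the previous offset alpha and the current state sigma,
  the expected product of the remaining weights is chi_alpha(c_j)^* tr(Z^(-c_j) sigma) times the
  remaining fidelities. In one round the outcome probability cancels the normalization of the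
  post-measurement state, so the round is linear in sigma. Averaging over beta twirls the gated
  state into its diagonal, which expands in the operators Z^s; averaging over alpha then keeps
  only s = c_j by orthogonality of characters, and the sum over the outcomes yields the
  generalized Pauli fidelity of c_j and c_(j+1).
\<close>

section \<open>Characters of Z_d^n\<close>

definition unity_root :: "nat \<Rightarrow> nat \<Rightarrow> complex" where
  "unity_root d N = cis (2 * pi * real N / real d)"

lemma chi_eq_unity_root: "chi d n z j = unity_root d (\<Sum>i<n. z i * j i)"
  unfolding chi_def unity_root_def by simp

lemma unity_root_add: "unity_root d (a + b) = unity_root d a * unity_root d b"
  unfolding unity_root_def by (simp add: cis_mult add_divide_distrib distrib_left)

lemma unity_root_multiple: "d > 0 \<Longrightarrow> unity_root d (d * k) = 1"
  unfolding unity_root_def using cis_multiple_2pi[of "real k"] by (simp add: mult.assoc)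

lemma unity_root_mod: "d > 0 \<Longrightarrow> unity_root d (a mod d) = unity_root d a"
  using unity_root_add[of d "a mod d" "d * (a div d)"] unity_root_multiple[of d "a div d"]
  by simp

lemma norm_unity_root [simp]: "norm (unity_root d a) = 1"
  unfolding unity_root_def by simp

lemma inj_on_unity_root: "d > 0 \<Longrightarrow> inj_on (unity_root d) {..<d}"
  using bij_betw_roots_unity[of d] unfolding unity_root_def bij_betw_def inj_on_def by blast

lemma chi_cong_mod:
  assumes "d > 0" "\<forall>i<n. x i mod d = x' i mod d"
  shows "chi d n z x = chi d n z x'"
proof -
  have "(\<Sum>i<n. z i * x i) mod d = (\<Sum>i<n. z i * x i mod d) mod d" by (simp add: mod_sum_eq)
  also have "\<dots> = (\<Sum>i<n. z i * x' i mod d) mod d"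
  proof (rule arg_cong[where f = "\<lambda>t. t mod d"], rule sum.cong[OF refl])
    fix i assume "i \<in> {..<n}"
    then show "z i * x i mod d = z i * x' i mod d"
      using assms(2) by (metis lessThan_iff mod_mult_right_eq)
  qed
  also have "\<dots> = (\<Sum>i<n. z i * x' i) mod d" by (simp add: mod_sum_eq)
  finally show ?thesis unfolding chi_eq_unity_root by (metis unity_root_mod[OF assms(1)])
qed

lemma chi_commute: "chi d n z x = chi d n x z"
  unfolding chi_def by (simp add: mult.commute)

lemma chi_add: "chi d n z (\<lambda>i. x i + y i) = chi d n z x * chi d n z y"
  unfolding chi_eq_unity_root by (simp add: distrib_left sum.distrib unity_root_add)

lemma norm_chi [simp]: "norm (chi d n z x) = 1"
  unfolding chi_eq_unity_root by simp

lemma chi_mult_cnj [simp]: "chi d n z x * cnj (chi d n z x) = 1"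
  using complex_norm_square[of "chi d n z x", symmetric] by simp

lemma cnj_mult_chi [simp]: "cnj (chi d n z x) * chi d n z x = 1"
  using chi_mult_cnj[of d n z x] by (simp add: mult.commute)

lemma chi_zero_right [simp]: "chi d n z zero_v = 1"
  unfolding chi_def zero_v_def by simp

lemma chi_zero_left [simp]: "chi d n zero_v x = 1"
  unfolding chi_def zero_v_def by simp

lemma addv_in_Zdn [simp]: "d > 0 \<Longrightarrow> addv d n x y \<in> Zdn d n"
  unfolding Zdn_def addv_def by auto

lemma subv_in_Zdn [simp]: "d > 0 \<Longrightarrow> subv d n x y \<in> Zdn d n"
  unfolding subv_def by simp

lemma bij_betw_restrict_Zdn: "bij_betw (\<lambda>x. restrict x {..<n}) (Zdn d n) (PiE {..<n} (\<lambda>_. {..<d}))"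
proof (rule bij_betwI[where g = "\<lambda>f i. if i < n then f i else 0"])
  show "(\<lambda>x. restrict x {..<n}) \<in> Zdn d n \<rightarrow> PiE {..<n} (\<lambda>_. {..<d})"
    unfolding Zdn_def by simp
  show "(\<lambda>f i. if i < n then f i else 0) \<in> PiE {..<n} (\<lambda>_. {..<d}) \<rightarrow> Zdn d n"
    unfolding Zdn_def by (simp add: PiE_iff)
  show "(\<lambda>i. if i < n then restrict x {..<n} i else 0) = x" if "x \<in> Zdn d n" for x
    using that unfolding Zdn_def by (simp add: fun_eq_iff)
  show "restrict (\<lambda>i. if i < n then f i else 0) {..<n} = f" if "f \<in> PiE {..<n} (\<lambda>_. {..<d})" for f
  proof
    fix i
    show "restrict (\<lambda>i. if i < n then f i else 0) {..<n} i = f i"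
      using PiE_arb[OF that, of i] by (cases "i < n") simp_all
  qed
qed

lemma finite_Zdn [simp]: "finite (Zdn d n)"
  using bij_betw_finite[OF bij_betw_restrict_Zdn] by (simp add: finite_PiE)

lemma card_Zdn: "card (Zdn d n) = d ^ n"
  using bij_betw_same_card[OF bij_betw_restrict_Zdn] by (simp add: card_PiE)

lemma neg_mod_add_cancel:
  fixes d v :: nat
  assumes "d > 0"
  shows "((d - v mod d) mod d + v) mod d = 0"
proof -
  have "((d - v mod d) mod d + v) mod d = (d - v mod d + v mod d) mod d"
    by (simp only: mod_add_left_eq mod_add_right_eq)
  then show ?thesis using mod_less_divisor[OF assms, of v] by simp
qed

lemma addv_subv_cancel:
  assumes "d > 0" "x \<in> Zdn d n"
  shows "addv d n (subv d n x v) v = x"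
proof
  fix i
  show "addv d n (subv d n x v) v i = x i"
  proof (cases "i < n")
    case True
    have "((x i + (d - v i mod d) mod d) mod d + v i) mod d
        = (x i + ((d - v i mod d) mod d + v i) mod d) mod d"
      by (simp add: mod_add_left_eq mod_add_right_eq add.assoc)
    also have "\<dots> = x i"
      using True assms unfolding neg_mod_add_cancel[OF assms(1)] Zdn_def by simp
    finally show ?thesis using True unfolding addv_def subv_def negv_def by simp
  next
    case False
    then show ?thesis using assms(2) unfolding addv_def Zdn_def by simp
  qed
qed

lemma subv_addv_cancel:
  assumes "d > 0" "x \<in> Zdn d n"
  shows "subv d n (addv d n x v) v = x"
proof
  fix i
  show "subv d n (addv d n x v) v i = x i"
  proof (cases "i < n")
    case True
    have "((x i + v i) mod d + (d - v i mod d) mod d) mod d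
        = (x i + ((d - v i mod d) mod d + v i) mod d) mod d"
      by (simp add: mod_add_left_eq mod_add_right_eq add_ac)
    also have "\<dots> = x i"
      using True assms unfolding neg_mod_add_cancel[OF assms(1)] Zdn_def by simp
    finally show ?thesis using True unfolding addv_def subv_def negv_def by simp
  next
    case False
    then show ?thesis using assms(2) unfolding subv_def addv_def Zdn_def by simp
  qed
qed

lemma bij_betw_addv:
  "d > 0 \<Longrightarrow> bij_betw (\<lambda>x. addv d n x v) (Zdn d n) (Zdn d n)"
  by (rule bij_betwI[where g = "\<lambda>x. subv d n x v"]) (auto simp: addv_subv_cancel subv_addv_cancel)

lemma chi_addv: "d > 0 \<Longrightarrow> chi d n z (addv d n x y) = chi d n z x * chi d n z y"
  by (subst chi_add[symmetric], rule chi_cong_mod) (auto simp: addv_def)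

lemma chi_negv:
  assumes "d > 0"
  shows "chi d n z (negv d n x) = cnj (chi d n z x)"
proof -
  have "chi d n z (negv d n x) * chi d n z x = chi d n z zero_v"
    unfolding chi_add[symmetric] using neg_mod_add_cancel[OF assms]
    by (intro chi_cong_mod[OF assms]) (simp add: negv_def zero_v_def)
  then have "chi d n z (negv d n x) * chi d n z x * cnj (chi d n z x) = cnj (chi d n z x)"
    by simp
  then show ?thesis by (simp add: mult.assoc)
qed

lemma chi_subv: "d > 0 \<Longrightarrow> chi d n z (subv d n x y) = chi d n z x * cnj (chi d n z y)"
  unfolding subv_def by (simp add: chi_addv chi_negv)

lemma sum_chi_orthogonal:
  assumes d: "d > 0" and x: "x \<in> Zdn d n" and y: "y \<in> Zdn d n"
  shows "(\<Sum>\<beta>\<in>Zdn d n. chi d n \<beta> x * cnj (chi d n \<beta> y)) = (if x = y then of_nat (d ^ n) else 0)"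
proof (cases "x = y")
  case True
  then show ?thesis by (simp add: card_Zdn)
next
  case False
  have "\<exists>i<n. x i \<noteq> y i"
  proof (rule ccontr)
    assume "\<not> (\<exists>i<n. x i \<noteq> y i)"
    then have "x k = y k" for k
      using x y unfolding Zdn_def by (cases "k < n") auto
    then show False using False by blast
  qed
  then obtain i where i: "i < n" "x i \<noteq> y i" by blast
  have xi: "x i < d" and yi: "y i < d" using x y i(1) unfolding Zdn_def by auto
  define b where "b = (\<lambda>k. if k = i then 1 else (0::nat))"
  have b: "b \<in> Zdn d n" using xi yi i unfolding Zdn_def b_def by auto
  have chi_b: "chi d n z b = unity_root d (z i)" for z
  proof -
    have "(\<Sum>k<n. z k * b k) = (\<Sum>k<n. if k = i then z k else 0)"
      unfolding b_def by (intro sum.cong) auto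
    then show ?thesis using i(1) unfolding chi_eq_unity_root by simp
  qed
  define f where "f = (\<lambda>\<beta>. chi d n \<beta> x * cnj (chi d n \<beta> y))"
  define q where "q = chi d n x b * cnj (chi d n y b)"
  \<comment> \<open>Translating the summation variable by the unit vector b multiplies every
    summand by the phase q, which differs from 1 because x i and y i differ.\<close>
  have "f (addv d n \<beta> b) = f \<beta> * q" for \<beta>
    unfolding f_def q_def chi_commute[of d n "addv d n \<beta> b"] chi_addv[OF d]
    by (simp add: chi_commute mult_ac)
  then have "sum f (Zdn d n) = sum f (Zdn d n) * q"
    using sum.reindex_bij_betw[OF bij_betw_addv[OF d, of n b], of f]
    by (simp add: sum_distrib_right)
  moreover have "q \<noteq> 1"
  proof
    assume "q = 1"
    then have "chi d n x b * cnj (chi d n y b) * chi d n y b = chi d n y b"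
      unfolding q_def by simp
    then have "chi d n x b = chi d n y b"
      by (simp only: mult.assoc cnj_mult_chi mult_1_right)
    then have "unity_root d (x i) = unity_root d (y i)"
      by (simp only: chi_b)
    then show False using inj_on_unity_root[OF d] xi yi i(2) unfolding inj_on_def by blast
  qed
  ultimately show ?thesis using False unfolding f_def by auto
qed

section \<open>Superoperators and the Weyl twirl\<close>

lemma superop_zero:
  assumes "superop d n \<Phi>"
  shows "\<Phi> (\<lambda>j k. 0) = (\<lambda>j k. 0)"
proof -
  have "\<Phi> (\<lambda>j k. 0 * A j k) = (\<lambda>j k. 0 * \<Phi> A j k)" for A
    using assms unfolding superop_def by blast
  then show ?thesis by simp
qed

lemma superop_sum:
  assumes "superop d n \<Phi>" and "finite S"
  shows "\<Phi> (\<lambda>j k. \<Sum>x\<in>S. f x j k) = (\<lambda>j k. \<Sum>x\<in>S. \<Phi> (f x) j k)"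
  using assms(2)
proof (induction S rule: finite_induct)
  case empty
  then show ?case using superop_zero[OF assms(1)] by simp
next
  case (insert a S)
  have "\<Phi> (\<lambda>j k. A j k + B j k) = (\<lambda>j k. \<Phi> A j k + \<Phi> B j k)" for A B
    using assms(1) unfolding superop_def by blast
  from this[of "f a" "\<lambda>j k. \<Sum>x\<in>S. f x j k"] show ?case using insert by simp
qed

lemma superop_scaled_sum:
  assumes "superop d n \<Phi>" and "finite S"
  shows "\<Phi> (\<lambda>j k. \<Sum>x\<in>S. c x * f x j k) = (\<lambda>j k. \<Sum>x\<in>S. c x * \<Phi> (f x) j k)"
proof -
  have "\<Phi> (\<lambda>j k. c * A j k) = (\<lambda>j k. c * \<Phi> A j k)" for c A
    using assms(1) unfolding superop_def by blast
  then show ?thesis using superop_sum[OF assms, of "\<lambda>x j k. c x * f x j k"] by simp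
qed

lemma superop_cong:
  assumes "superop d n \<Phi>" "\<forall>j\<in>Zdn d n. \<forall>k\<in>Zdn d n. A j k = B j k"
    and "j \<in> Zdn d n" "k \<in> Zdn d n"
  shows "\<Phi> A j k = \<Phi> B j k"
  using assms unfolding superop_def by blast

lemma weyl_entry:
  assumes d: "d > 0" and x: "x \<in> Zdn d n" and l: "l \<in> Zdn d n"
  shows "mmult d n (Zop d n \<beta>) (Xop d n v) x l = (if l = subv d n x v then chi d n \<beta> x else 0)"
proof -
  have "mmult d n (Zop d n \<beta>) (Xop d n v) x l = (\<Sum>t\<in>Zdn d n. if t = x then chi d n \<beta> x * Xop d n v x l else 0)"
    unfolding mmult_def Zop_def using x by (intro sum.cong) auto
  also have "\<dots> = chi d n \<beta> x * Xop d n v x l" using x by simp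
  also have "\<dots> = (if l = subv d n x v then chi d n \<beta> x else 0)"
    unfolding Xop_def using x l addv_subv_cancel[OF d x, of v] subv_addv_cancel[OF d l, of v] by auto
  finally show ?thesis .
qed

lemma conj_by_weyl_entry:
  assumes d: "d > 0" and x: "x \<in> Zdn d n" and y: "y \<in> Zdn d n"
  shows "conj_by d n (mmult d n (Zop d n \<beta>) (Xop d n v)) \<sigma> x y
       = chi d n \<beta> x * cnj (chi d n \<beta> y) * \<sigma> (subv d n x v) (subv d n y v)"
proof -
  let ?G = "mmult d n (Zop d n \<beta>) (Xop d n v)"
  have "mmult d n \<sigma> (adj ?G) l y
      = (\<Sum>l'\<in>Zdn d n. if l' = subv d n y v then \<sigma> l l' * cnj (chi d n \<beta> y) else 0)" for l
    unfolding mmult_def[of d n \<sigma>] adj_def by (intro sum.cong refl) (simp add: weyl_entry[OF d y])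
  then have "conj_by d n ?G \<sigma> x y
      = (\<Sum>l\<in>Zdn d n. if l = subv d n x v then chi d n \<beta> x * (\<sigma> l (subv d n y v) * cnj (chi d n \<beta> y)) else 0)"
    unfolding conj_by_def mmult_def[of d n ?G] using d
    by (intro sum.cong refl) (simp add: weyl_entry[OF d x])
  also have "\<dots> = chi d n \<beta> x * cnj (chi d n \<beta> y) * \<sigma> (subv d n x v) (subv d n y v)"
    using d by (simp add: mult_ac)
  finally show ?thesis .
qed

lemma sum_conj_by_weyl_entry:
  assumes d: "d > 0" and x: "x \<in> Zdn d n" and y: "y \<in> Zdn d n"
  shows "(\<Sum>\<beta>\<in>Zdn d n. conj_by d n (mmult d n (Zop d n \<beta>) (Xop d n v)) \<sigma> x y)
       = (if x = y then of_nat (d ^ n) * \<sigma> (subv d n x v) (subv d n x v) else 0)"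
  using sum_chi_orthogonal[OF d x y]
  by (simp add: conj_by_weyl_entry[OF d x y] sum_distrib_right[symmetric])

lemma diagonal_eq_sum_Zop:
  assumes d: "d > 0" and x: "x \<in> Zdn d n" and y: "y \<in> Zdn d n"
  shows "(if x = y then of_nat (d ^ n) * g x else 0)
       = (\<Sum>s\<in>Zdn d n. (\<Sum>z\<in>Zdn d n. g z * cnj (chi d n s z)) * Zop d n s x y)"
proof (cases "x = y")
  case False
  then show ?thesis unfolding Zop_def by simp
next
  case True
  have "(\<Sum>s\<in>Zdn d n. (\<Sum>z\<in>Zdn d n. g z * cnj (chi d n s z)) * Zop d n s x y)
      = (\<Sum>s\<in>Zdn d n. \<Sum>z\<in>Zdn d n. g z * (chi d n s x * cnj (chi d n s z)))"
    unfolding Zop_def using True x by (simp add: sum_distrib_left sum_distrib_right mult_ac)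
  also have "\<dots> = (\<Sum>z\<in>Zdn d n. g z * (\<Sum>s\<in>Zdn d n. chi d n s x * cnj (chi d n s z)))"
    by (subst sum.swap) (simp add: sum_distrib_left)
  also have "\<dots> = of_nat (d ^ n) * g x"
    using x by (simp add: sum_chi_orthogonal[OF d x] if_distrib mult.commute cong: if_cong)
  finally show ?thesis using True by simp
qed

section \<open>Positive semidefinite operators\<close>

definition quad_form :: "'i set \<Rightarrow> ('i \<Rightarrow> 'i \<Rightarrow> complex) \<Rightarrow> ('i \<Rightarrow> complex) \<Rightarrow> complex" where
  "quad_form I A v = (\<Sum>i\<in>I. \<Sum>j\<in>I. cnj (v i) * A i j * v j)"

lemma psd_iff_quad_form: "psd I A \<longleftrightarrow> (\<forall>v. quad_form I A v \<in> \<real> \<and> Re (quad_form I A v) \<ge> 0)"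
  unfolding psd_def quad_form_def by simp

lemma psd_diag_nonneg:
  assumes "psd I A" "finite I" "j \<in> I"
  shows "A j j \<in> \<real> \<and> Re (A j j) \<ge> 0"
proof -
  have "quad_form I A (\<lambda>i. if i = j then 1 else 0) = (\<Sum>i\<in>I. if i = j then A j j else 0)"
    unfolding quad_form_def using assms(2)
    by (intro sum.cong refl) (auto simp: mult.commute[of "A _ _"] if_distrib cong: if_cong)
  also have "\<dots> = A j j" using assms(2,3) by simp
  finally have "quad_form I A (\<lambda>i. if i = j then 1 else 0) = A j j" .
  then show ?thesis using assms(1) unfolding psd_iff_quad_form by metis
qed

lemma psd_trace_nonneg:
  assumes "psd I A" "finite I"
  shows "(\<Sum>j\<in>I. A j j) \<in> \<real> \<and> Re (\<Sum>j\<in>I. A j j) \<ge> 0"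
  using psd_diag_nonneg[OF assms] by (simp add: Re_sum sum_nonneg sum_in_Reals)

lemma psd_diag_eq_0_if_trace_eq_0:
  assumes "psd I A" "finite I" "(\<Sum>j\<in>I. A j j) = 0" "j \<in> I"
  shows "A j j = 0"
proof -
  have "(\<Sum>i\<in>I. Re (A i i)) = 0" using arg_cong[OF assms(3), of Re] by (simp add: Re_sum)
  moreover have "\<forall>i\<in>I. Re (A i i) \<ge> 0" using psd_diag_nonneg[OF assms(1,2)] by blast
  ultimately have "Re (A j j) = 0"
    using sum_nonneg_eq_0_iff[OF assms(2), of "\<lambda>i. Re (A i i)"] assms(4) by simp
  then show ?thesis using psd_diag_nonneg[OF assms(1,2,4)] by (simp add: complex_eq_iff complex_is_Real_iff)
qed

lemma psd_divide:
  assumes "psd I A" "p \<in> \<real>" "Re p > 0"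
  shows "psd I (\<lambda>j k. A j k / p)"
proof -
  have "quad_form I (\<lambda>j k. A j k / p) v = quad_form I A v / p" for v
    unfolding quad_form_def by (simp add: sum_divide_distrib)
  moreover have "Re (z / p) = Re z / Re p" if "z \<in> \<real>" for z
    using that assms(2) by (auto elim!: Reals_cases)
  ultimately show ?thesis
    using assms unfolding psd_iff_quad_form by (simp add: Reals_divide)
qed

lemma completely_positive_imp_psd:
  assumes "completely_positive d n \<Phi>" "psd (Zdn d n) A"
  shows "psd (Zdn d n) (\<Phi> A)"
proof -
  define X where "X = (\<lambda>(_::nat, j::zvec) (_::nat, l::zvec). A j l)"
  \<comment> \<open>Only the amplification to a single copy (k = 1) is needed.\<close>
  have "{..<1::nat} \<times> Zdn d n = Pair 0 ` Zdn d n" by auto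
  then have one_copy: "quad_form ({..<1} \<times> Zdn d n) B v = quad_form (Zdn d n) (\<lambda>i j. B (0, i) (0, j)) (\<lambda>i. v (0, i))"
    for B :: "nat \<times> zvec \<Rightarrow> nat \<times> zvec \<Rightarrow> complex" and v
    unfolding quad_form_def by (simp add: sum.reindex inj_on_def)
  have "psd ({..<1} \<times> Zdn d n) X"
    using assms(2) unfolding psd_iff_quad_form one_copy X_def by simp
  then have "psd ({..<1} \<times> Zdn d n) (ampl \<Phi> X)"
    using assms(1) unfolding completely_positive_def by blast
  moreover have "quad_form (Zdn d n) (\<Phi> A) v = quad_form ({..<1} \<times> Zdn d n) (ampl \<Phi> X) (\<lambda>(_, i). v i)" for v
    unfolding one_copy ampl_def X_def by simp
  ultimately show ?thesis unfolding psd_iff_quad_form by simp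
qed

lemma psd_conj_by:
  assumes "psd (Zdn d n) \<sigma>"
  shows "psd (Zdn d n) (conj_by d n G \<sigma>)"
proof -
  let ?Z = "Zdn d n"
  have "quad_form ?Z (conj_by d n G \<sigma>) v = quad_form ?Z \<sigma> (\<lambda>l. \<Sum>j\<in>?Z. cnj (G j l) * v j)" for v
  proof -
    have "quad_form ?Z (conj_by d n G \<sigma>) v
        = (\<Sum>i\<in>?Z. \<Sum>j\<in>?Z. \<Sum>l\<in>?Z. \<Sum>l'\<in>?Z. cnj (v i) * G i l * \<sigma> l l' * cnj (G j l') * v j)"
      unfolding quad_form_def conj_by_def mmult_def adj_def
      by (simp add: sum_distrib_left sum_distrib_right mult_ac)
    also have "\<dots> = (\<Sum>l\<in>?Z. \<Sum>l'\<in>?Z. \<Sum>i\<in>?Z. \<Sum>j\<in>?Z. cnj (v i) * G i l * \<sigma> l l' * cnj (G j l') * v j)"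
      by (subst (2) sum.swap, subst sum.swap, subst (3) sum.swap, subst (2) sum.swap) (rule refl)
    also have "\<dots> = quad_form ?Z \<sigma> (\<lambda>l. \<Sum>j\<in>?Z. cnj (G j l) * v j)"
      unfolding quad_form_def by (simp add: sum_distrib_left sum_distrib_right mult_ac cnj_sum)
    finally show ?thesis .
  qed
  then show ?thesis using assms unfolding psd_iff_quad_form by simp
qed

section \<open>One round of the benchmark\<close>

definition char_trace :: "nat \<Rightarrow> nat \<Rightarrow> zvec \<Rightarrow> qop \<Rightarrow> complex" where
  "char_trace d n t A = (\<Sum>y\<in>Zdn d n. cnj (chi d n t y) * A y y)"

lemma qtr_mmult_adj_Zop: "qtr d n (mmult d n (adj (Zop d n t)) A) = char_trace d n t A"
proof -
  have "mmult d n (adj (Zop d n t)) A y y = cnj (chi d n t y) * A y y" if "y \<in> Zdn d n" for y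
  proof -
    have "mmult d n (adj (Zop d n t)) A y y
        = (\<Sum>l\<in>Zdn d n. if l = y then cnj (chi d n t y) * A y y else 0)"
      unfolding mmult_def adj_def Zop_def using that by (intro sum.cong refl) auto
    then show ?thesis using that by simp
  qed
  then show ?thesis unfolding qtr_def char_trace_def by (intro sum.cong refl) auto
qed

lemma qtr_mmult_Zop_negv:
  assumes "d > 0"
  shows "qtr d n (mmult d n (Zop d n (negv d n c)) A) = char_trace d n c A"
proof -
  have "mmult d n (Zop d n (negv d n c)) A y y = cnj (chi d n c y) * A y y" if "y \<in> Zdn d n" for y
  proof -
    have "mmult d n (Zop d n (negv d n c)) A y y
        = (\<Sum>l\<in>Zdn d n. if l = y then chi d n (negv d n c) y * A y y else 0)"
      unfolding mmult_def Zop_def using that by (intro sum.cong refl) auto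
    also have "\<dots> = cnj (chi d n c y) * A y y"
      using that by (simp add: chi_commute[of d n "negv d n c"] chi_negv[OF assms] chi_commute[of d n y])
    finally show ?thesis .
  qed
  then show ?thesis unfolding qtr_def char_trace_def by (intro sum.cong refl) auto
qed

lemma char_trace_zero_v: "char_trace d n zero_v A = qtr d n A"
  unfolding char_trace_def qtr_def by simp

lemma char_trace_cong: "(\<forall>y\<in>Zdn d n. A y y = B y y) \<Longrightarrow> char_trace d n t A = char_trace d n t B"
  unfolding char_trace_def by (intro sum.cong refl) auto

lemma char_trace_sum: "char_trace d n t (\<lambda>j k. \<Sum>x\<in>S. f x j k) = (\<Sum>x\<in>S. char_trace d n t (f x))"
  unfolding char_trace_def by (simp add: sum_distrib_left sum.swap[of _ S])

lemma char_trace_scaled_sum: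
  "char_trace d n t (\<lambda>j k. \<Sum>x\<in>S. g x * f x j k) = (\<Sum>x\<in>S. g x * char_trace d n t (f x))"
  unfolding char_trace_def by (simp add: sum_distrib_left sum.swap[of _ S] mult_ac)

lemma char_trace_divide: "char_trace d n t (\<lambda>j k. A j k / p) = char_trace d n t A / p"
  unfolding char_trace_def by (simp add: sum_divide_distrib)

lemma gpf_eq_char_trace:
  "gpf d n M s t = (\<Sum>k\<in>Zdn d n. cnj (chi d n k (subv d n s t)) * char_trace d n t (M k (Zop d n s)))
     / of_nat (d ^ n)"
  unfolding gpf_def qtr_mmult_adj_Zop by simp

lemma sum_shifted_diag_chi:
  assumes d: "d > 0" and v: "v \<in> Zdn d n"
  shows "(\<Sum>z\<in>Zdn d n. \<sigma> (subv d n z v) (subv d n z v) * cnj (chi d n s z))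
       = cnj (chi d n s v) * char_trace d n s \<sigma>"
proof -
  have "(\<Sum>z\<in>Zdn d n. \<sigma> (subv d n z v) (subv d n z v) * cnj (chi d n s z))
      = (\<Sum>y\<in>Zdn d n. \<sigma> (subv d n (addv d n y v) v) (subv d n (addv d n y v) v) * cnj (chi d n s (addv d n y v)))"
    using sum.reindex_bij_betw[OF bij_betw_addv[OF d, of n v],
        of "\<lambda>z. \<sigma> (subv d n z v) (subv d n z v) * cnj (chi d n s z)"]
    by simp
  also have "\<dots> = (\<Sum>y\<in>Zdn d n. cnj (chi d n s v) * (cnj (chi d n s y) * \<sigma> y y))"
    by (intro sum.cong refl) (simp add: subv_addv_cancel[OF d] chi_addv[OF d] mult_ac)
  finally show ?thesis unfolding char_trace_def by (simp add: sum_distrib_left)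
qed

lemma twirl_char_trace:
  assumes d: "d > 0" and \<Phi>: "superop d n \<Phi>" and v: "v \<in> Zdn d n"
  shows "(\<Sum>\<beta>\<in>Zdn d n. char_trace d n t (\<Phi> (conj_by d n (mmult d n (Zop d n \<beta>) (Xop d n v)) \<sigma>)))
       = (\<Sum>s\<in>Zdn d n. cnj (chi d n s v) * char_trace d n s \<sigma> * char_trace d n t (\<Phi> (Zop d n s)))"
proof -
  let ?Z = "Zdn d n"
  let ?X = "\<lambda>\<beta>. conj_by d n (mmult d n (Zop d n \<beta>) (Xop d n v)) \<sigma>"
  let ?coef = "\<lambda>s. \<Sum>z\<in>?Z. \<sigma> (subv d n z v) (subv d n z v) * cnj (chi d n s z)"
  \<comment> \<open>The twirled state is diagonal, hence a combination of the operators Z^s.\<close>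
  have "\<forall>j\<in>?Z. \<forall>k\<in>?Z. (\<Sum>\<beta>\<in>?Z. ?X \<beta> j k) = (\<Sum>s\<in>?Z. ?coef s * Zop d n s j k)"
    using sum_conj_by_weyl_entry[OF d, of _ n _ v \<sigma>]
      diagonal_eq_sum_Zop[OF d, of _ n _ "\<lambda>x. \<sigma> (subv d n x v) (subv d n x v)"]
    by simp
  then have diag: "\<Phi> (\<lambda>j k. \<Sum>\<beta>\<in>?Z. ?X \<beta> j k) y y = \<Phi> (\<lambda>j k. \<Sum>s\<in>?Z. ?coef s * Zop d n s j k) y y"
    if "y \<in> ?Z" for y
    by (rule superop_cong[OF \<Phi> _ that that])
  have "(\<Sum>\<beta>\<in>?Z. char_trace d n t (\<Phi> (?X \<beta>))) = char_trace d n t (\<Phi> (\<lambda>j k. \<Sum>\<beta>\<in>?Z. ?X \<beta> j k))"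
    by (simp add: char_trace_sum superop_sum[OF \<Phi> finite_Zdn])
  also have "\<dots> = char_trace d n t (\<Phi> (\<lambda>j k. \<Sum>s\<in>?Z. ?coef s * Zop d n s j k))"
    using diag by (blast intro: char_trace_cong)
  also have "\<dots> = (\<Sum>s\<in>?Z. ?coef s * char_trace d n t (\<Phi> (Zop d n s)))"
    by (simp add: superop_scaled_sum[OF \<Phi> finite_Zdn] char_trace_scaled_sum)
  finally show ?thesis by (simp add: sum_shifted_diag_chi[OF d v])
qed

lemma weighted_normalized_char_trace:
  assumes \<tau>: "psd (Zdn d n) \<tau>"
    and f: "\<And>\<sigma>. psd (Zdn d n) \<sigma> \<Longrightarrow> qtr d n \<sigma> = 1 \<Longrightarrow> f \<sigma> = r * char_trace d n t \<sigma>"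
  shows "(if qtr d n \<tau> = 0 then 0 else qtr d n \<tau> * f (\<lambda>j k. \<tau> j k / qtr d n \<tau>))
       = r * char_trace d n t \<tau>"
proof (cases "qtr d n \<tau> = 0")
  case True
  then have "\<forall>y\<in>Zdn d n. \<tau> y y = 0"
    using psd_diag_eq_0_if_trace_eq_0[OF \<tau> finite_Zdn] unfolding qtr_def by blast
  then show ?thesis using True unfolding char_trace_def by simp
next
  case False
  have "qtr d n \<tau> \<in> \<real>" "Re (qtr d n \<tau>) > 0"
    using psd_trace_nonneg[OF \<tau> finite_Zdn] False unfolding qtr_def
    by (auto simp: complex_eq_iff complex_is_Real_iff)
  then have "psd (Zdn d n) (\<lambda>j k. \<tau> j k / qtr d n \<tau>)" by (rule psd_divide[OF \<tau>])
  moreover have "qtr d n (\<lambda>j k. \<tau> j k / qtr d n \<tau>) = 1"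
    using False unfolding qtr_def by (simp add: sum_divide_distrib[symmetric])
  ultimately show ?thesis using False by (simp add: f char_trace_divide)
qed

lemma round_phase:
  assumes d: "d > 0"
  shows "cnj (chi d n (addv d n \<alpha> u) (subv d n c c')) * cnj (chi d n c' \<alpha>) * cnj (chi d n s (subv d n a \<alpha>))
       = cnj (chi d n u (subv d n c c')) * cnj (chi d n s a) * (chi d n \<alpha> s * cnj (chi d n \<alpha> c))"
proof -
  have "chi d n (addv d n \<alpha> u) (subv d n c c') = chi d n \<alpha> c * cnj (chi d n \<alpha> c') * chi d n u (subv d n c c')"
    unfolding chi_commute[of d n "addv d n \<alpha> u"] chi_addv[OF d]
    by (simp add: chi_commute[of d n "subv d n c c'"] chi_subv[OF d])
  moreover have "cnj (chi d n s (subv d n a \<alpha>)) = cnj (chi d n s a) * chi d n \<alpha> s"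
    by (simp add: chi_subv[OF d] chi_commute[of d n s \<alpha>])
  ultimately show ?thesis
    by (simp add: chi_commute[of d n c' \<alpha>] mult_ac)
qed

lemma twirled_round_term:
  assumes d: "d > 0" and \<Phi>: "superop d n \<Phi>"
  shows "cnj (chi d n (addv d n \<alpha> u) (subv d n c c')) * (cnj (chi d n c' \<alpha>) * R) *
           (\<Sum>\<beta>\<in>Zdn d n. char_trace d n c' (\<Phi> (conj_by d n (mmult d n (Zop d n \<beta>) (Xop d n (subv d n a \<alpha>))) \<sigma>)))
       = (\<Sum>s\<in>Zdn d n. R * (cnj (chi d n u (subv d n c c')) * cnj (chi d n s a) * char_trace d n s \<sigma> *
           char_trace d n c' (\<Phi> (Zop d n s))) * (chi d n \<alpha> s * cnj (chi d n \<alpha> c)))"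
  unfolding twirl_char_trace[OF d \<Phi> subv_in_Zdn[OF d]] sum_distrib_left
proof (rule sum.cong[OF refl])
  fix s
  let ?phase = "cnj (chi d n (addv d n \<alpha> u) (subv d n c c')) * cnj (chi d n c' \<alpha>) * cnj (chi d n s (subv d n a \<alpha>))"
  have "cnj (chi d n (addv d n \<alpha> u) (subv d n c c')) * (cnj (chi d n c' \<alpha>) * R) *
        (cnj (chi d n s (subv d n a \<alpha>)) * char_trace d n s \<sigma> * char_trace d n c' (\<Phi> (Zop d n s)))
      = ?phase * (R * char_trace d n s \<sigma> * char_trace d n c' (\<Phi> (Zop d n s)))"
    by (simp only: mult_ac)
  also have "\<dots> = R * (cnj (chi d n u (subv d n c c')) * cnj (chi d n s a) * char_trace d n s \<sigma> *
           char_trace d n c' (\<Phi> (Zop d n s))) * (chi d n \<alpha> s * cnj (chi d n \<alpha> c))"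
    unfolding round_phase[OF d] by (simp only: mult_ac)
  finally show "cnj (chi d n (addv d n \<alpha> u) (subv d n c c')) * (cnj (chi d n c' \<alpha>) * R) *
        (cnj (chi d n s (subv d n a \<alpha>)) * char_trace d n s \<sigma> * char_trace d n c' (\<Phi> (Zop d n s)))
      = R * (cnj (chi d n u (subv d n c c')) * cnj (chi d n s a) * char_trace d n s \<sigma> *
           char_trace d n c' (\<Phi> (Zop d n s))) * (chi d n \<alpha> s * cnj (chi d n \<alpha> c))" .
qed

lemma bench_exp_Cons_linear:
  assumes M: "instrument d n M" and \<sigma>: "psd (Zdn d n) \<sigma>"
    and IH: "\<And>\<alpha> \<sigma>'. \<alpha> \<in> Zdn d n \<Longrightarrow> psd (Zdn d n) \<sigma>' \<Longrightarrow> qtr d n \<sigma>' = 1 \<Longrightarrow>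
               bench_exp d n M ws \<alpha> \<sigma>' = r \<alpha> * char_trace d n t \<sigma>'"
  shows "bench_exp d n M (w # ws) a \<sigma>
       = (\<Sum>\<alpha>\<in>Zdn d n. \<Sum>\<beta>\<in>Zdn d n. \<Sum>u\<in>Zdn d n. w (addv d n \<alpha> u) * r \<alpha> *
            char_trace d n t (M u (conj_by d n (mmult d n (Zop d n \<beta>) (Xop d n (subv d n a \<alpha>))) \<sigma>)))
         / of_nat (d ^ n) ^ 2"
  unfolding bench_exp.simps Let_def sum_divide_distrib
proof (intro sum.cong refl)
  fix \<alpha> \<beta> u assume \<alpha>: "\<alpha> \<in> Zdn d n" and u: "u \<in> Zdn d n"
  let ?\<tau> = "M u (conj_by d n (mmult d n (Zop d n \<beta>) (Xop d n (subv d n a \<alpha>))) \<sigma>)"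
  have "completely_positive d n (M u)" using M u unfolding instrument_def by blast
  then have "psd (Zdn d n) ?\<tau>" using completely_positive_imp_psd psd_conj_by[OF \<sigma>] by blast
  from weighted_normalized_char_trace[OF this IH[OF \<alpha>]]
  show "(if qtr d n ?\<tau> = 0 then 0
         else 1 / of_nat (d ^ n) * (1 / of_nat (d ^ n)) * qtr d n ?\<tau> * w (addv d n \<alpha> u) *
              bench_exp d n M ws \<alpha> (\<lambda>j k. ?\<tau> j k / qtr d n ?\<tau>))
      = w (addv d n \<alpha> u) * r \<alpha> * char_trace d n t ?\<tau> / of_nat (d ^ n) ^ 2"
    by (cases "qtr d n ?\<tau> = 0") (auto simp: power2_eq_square mult_ac)
qed

lemma bench_exp_Cons_char:
  assumes d: "d > 0" and M: "instrument d n M" and \<sigma>: "psd (Zdn d n) \<sigma>" and c: "c \<in> Zdn d n"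
    and IH: "\<And>\<alpha> \<sigma>'. \<alpha> \<in> Zdn d n \<Longrightarrow> psd (Zdn d n) \<sigma>' \<Longrightarrow> qtr d n \<sigma>' = 1 \<Longrightarrow>
               bench_exp d n M ws \<alpha> \<sigma>' = cnj (chi d n c' \<alpha>) * R * char_trace d n c' \<sigma>'"
  shows "bench_exp d n M ((\<lambda>k. cnj (chi d n k (subv d n c c'))) # ws) a \<sigma>
       = cnj (chi d n c a) * (gpf d n M c c' * R) * char_trace d n c \<sigma>"
proof -
  let ?Z = "Zdn d n"
  let ?W = "\<lambda>k. cnj (chi d n k (subv d n c c'))"
  let ?N = "of_nat (d ^ n) :: complex"
  define F where "F u s = cnj (chi d n u (subv d n c c')) * cnj (chi d n s a) * char_trace d n s \<sigma> *
      char_trace d n c' (M u (Zop d n s))" for u s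
  have M_u: "superop d n (M u)" if "u \<in> ?Z" for u
    using M that unfolding instrument_def completely_positive_def by blast
  have N: "?N ^ 2 \<noteq> 0" using d by simp
  have "bench_exp d n M (?W # ws) a \<sigma> * ?N ^ 2
      = (\<Sum>\<alpha>\<in>?Z. \<Sum>\<beta>\<in>?Z. \<Sum>u\<in>?Z. ?W (addv d n \<alpha> u) * (cnj (chi d n c' \<alpha>) * R) *
           char_trace d n c' (M u (conj_by d n (mmult d n (Zop d n \<beta>) (Xop d n (subv d n a \<alpha>))) \<sigma>)))"
    using bench_exp_Cons_linear[OF M \<sigma> IH, of ?W a] unfolding nonzero_eq_divide_eq[OF N] .
  also have "\<dots> = (\<Sum>\<alpha>\<in>?Z. \<Sum>u\<in>?Z. ?W (addv d n \<alpha> u) * (cnj (chi d n c' \<alpha>) * R) *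
           (\<Sum>\<beta>\<in>?Z. char_trace d n c' (M u (conj_by d n (mmult d n (Zop d n \<beta>) (Xop d n (subv d n a \<alpha>))) \<sigma>))))"
    by (rule sum.cong[OF refl], subst sum.swap) (simp add: sum_distrib_left)
  also have "\<dots> = (\<Sum>\<alpha>\<in>?Z. \<Sum>u\<in>?Z. \<Sum>s\<in>?Z. R * F u s * (chi d n \<alpha> s * cnj (chi d n \<alpha> c)))"
    unfolding F_def by (intro sum.cong refl) (rule twirled_round_term[OF d M_u], assumption)
  also have "\<dots> = (\<Sum>u\<in>?Z. \<Sum>s\<in>?Z. R * F u s * (\<Sum>\<alpha>\<in>?Z. chi d n \<alpha> s * cnj (chi d n \<alpha> c)))"
    by (subst sum.swap, rule sum.cong[OF refl], subst sum.swap) (simp add: sum_distrib_left)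
  also have "\<dots> = R * (\<Sum>u\<in>?Z. F u c) * ?N"
    using c by (simp add: sum_chi_orthogonal[OF d _ c] if_distrib sum_distrib_left sum_distrib_right cong: if_cong)
  also have "\<dots> = cnj (chi d n c a) * (gpf d n M c c' * R) * char_trace d n c \<sigma> * ?N ^ 2"
    using d unfolding gpf_eq_char_trace F_def
    by (simp add: sum_distrib_left sum_distrib_right sum_divide_distrib power2_eq_square mult_ac)
  finally show ?thesis unfolding mult_right_cancel[OF N] .
qed

lemma bench_exp_char_weights:
  assumes d: "d > 0" and M: "instrument d n M" and "k \<le> Suc m"
    and "\<forall>j\<in>{k..m}. c j \<in> Zdn d n" and "c (Suc m) = zero_v"
    and "psd (Zdn d n) \<sigma>" and "qtr d n \<sigma> = 1"
  shows "bench_exp d n M (map (\<lambda>j k. cnj (chi d n k (subv d n (c j) (c (Suc j))))) [k..<Suc m]) a \<sigma>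
       = cnj (chi d n (c k) a) * (\<Prod>j = k..m. gpf d n M (c j) (c (Suc j))) * char_trace d n (c k) \<sigma>"
  using assms(3-7)
proof (induction k arbitrary: a \<sigma> rule: inc_induct)
  case base
  then show ?case by (simp add: char_trace_zero_v)
next
  case (step k)
  let ?W = "\<lambda>j k. cnj (chi d n k (subv d n (c j) (c (Suc j))))"
  let ?P = "\<lambda>k. \<Prod>j = k..m. gpf d n M (c j) (c (Suc j))"
  have IH: "bench_exp d n M (map ?W [Suc k..<Suc m]) \<alpha> \<sigma>'
      = cnj (chi d n (c (Suc k)) \<alpha>) * ?P (Suc k) * char_trace d n (c (Suc k)) \<sigma>'"
    if "psd (Zdn d n) \<sigma>'" "qtr d n \<sigma>' = 1" for \<alpha> \<sigma>'
    by (rule step.IH) (use step.prems(1,2) that in auto)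
  have "c k \<in> Zdn d n" using step.prems(1) step.hyps by simp
  have "[k..<Suc m] = k # [Suc k..<Suc m]" using step.hyps(2) by (simp add: upt_conv_Cons)
  then have "bench_exp d n M (map ?W [k..<Suc m]) a \<sigma> = bench_exp d n M (?W k # map ?W [Suc k..<Suc m]) a \<sigma>"
    by simp
  also have "\<dots> = cnj (chi d n (c k) a) * (gpf d n M (c k) (c (Suc k)) * ?P (Suc k)) * char_trace d n (c k) \<sigma>"
    by (rule bench_exp_Cons_char[OF d M step.prems(3) \<open>c k \<in> Zdn d n\<close> IH])
  also have "gpf d n M (c k) (c (Suc k)) * ?P (Suc k) = ?P k"
    using step.hyps(2) by (simp add: prod.atLeast_Suc_atMost)
  finally show ?case .
qed

theorem theorem4:
  fixes d n m :: nat and M :: "zvec \<Rightarrow> qop \<Rightarrow> qop" and \<rho> :: qop and c :: "nat \<Rightarrow> zvec"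
  assumes "d > 0" and "n > 0" and "m > 0"
    and "instrument d n M"
    and "density d n \<rho>"
    and "\<forall>j\<in>{1..m}. c j \<in> Zdn d n"
    and "c (Suc m) = zero_v"
  shows "bench_exp d n M
           (map (\<lambda>j. \<lambda>k. cnj (chi d n k (subv d n (c j) (c (Suc j))))) [1..<Suc m])
           zero_v \<rho>
         = qtr d n (mmult d n (Zop d n (negv d n (c 1))) \<rho>) *
           (\<Prod>j = 1..m. gpf d n M (c j) (c (Suc j)))"
proof -
  have "psd (Zdn d n) \<rho>" "qtr d n \<rho> = 1" using assms(5) unfolding density_def by auto
  from bench_exp_char_weights[OF assms(1,4) _ assms(6,7) this, of zero_v]
  show ?thesis by (simp add: qtr_mmult_Zop_negv[OF assms(1)] mult.commute)
qed

end
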